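(* Let $n\ge 3$, let $a>0$ be a constant, and let $f$ be continuous on $(0,\infty)$ with $\lim_{t\to\infty}f(t)=0$. Let $y$ be a solution of \[ y''+\frac{n-1}{t}y'+\frac{a+f(t)}{t^2}y=0 \] that is bounded on some interval $(t_0,\infty)$. Then $\lim_{t\to\infty}y(t)=0$. *)

theory Defs
  imports "HOL-Analysis.Analysis"
begin

end

theory Submission
  imports Defs
begin

text \<open>With \<open>v = t y'\<close> and \<open>c = n - 2 > 0\<close>, the equation becomes the first-order system
  \<open>y' = v / t\<close>, \<open>v' = -(c v + (a + f) y) / t\<close>, a perturbation of an Euler system whose
  characteristic roots have negative real part. The positive definite quadratic form
  \<open>W = v\<^sup>2 + c y v + (a + c\<^sup>2/2) y\<^sup>2\<close> satisfies \<open>t W' \<le> -k W\<close> for some \<open>k > 0\<close> once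
  \<open>|f|\<close> is small, so \<open>t\<^sup>k W\<close> is nonincreasing and \<open>y\<^sup>2 \<le> W / a = O(t\<^sup>-\<^sup>k)\<close>.\<close>

definition lyapunov_form :: "real \<Rightarrow> real \<Rightarrow> real \<Rightarrow> real \<Rightarrow> real" where
  "lyapunov_form a c y v = v\<^sup>2 + c * y * v + (a + c\<^sup>2 / 2) * y\<^sup>2"

lemma lyapunov_form_ge: "a * y\<^sup>2 \<le> lyapunov_form a c y v"
proof -
  have "lyapunov_form a c y v - a * y\<^sup>2 = (v + c * y / 2)\<^sup>2 + c\<^sup>2 / 4 * y\<^sup>2"
    by (simp add: lyapunov_form_def power2_eq_square algebra_simps)
  moreover have "0 \<le> (v + c * y / 2)\<^sup>2 + c\<^sup>2 / 4 * y\<^sup>2" by simp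
  ultimately show ?thesis by linarith
qed

lemma lyapunov_form_le:
  assumes "c \<ge> 0"
  shows "lyapunov_form a c y v \<le> (1 + c / 2) * v\<^sup>2 + (a + c\<^sup>2 / 2 + c / 2) * y\<^sup>2"
proof -
  have "2 * y * v \<le> y\<^sup>2 + v\<^sup>2"
    using sum_squares_bound[of y v] by (simp add: power2_eq_square)
  then have "c / 2 * (2 * y * v) \<le> c / 2 * (y\<^sup>2 + v\<^sup>2)"
    using assms by (intro mult_left_mono) auto
  then show ?thesis by (simp add: lyapunov_form_def algebra_simps)
qed

lemma lyapunov_form_dominated:
  assumes "a > 0" "c > 0"
  obtains k :: real where "k > 0"
    "\<And>y v. k * lyapunov_form a c y v \<le> c / 2 * v\<^sup>2 + c * a / 2 * y\<^sup>2"
proof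
  define k where "k = min (c / (2 + c)) (c * a / (2 * a + c\<^sup>2 + c))"
  have den: "2 * a + c\<^sup>2 + c > 0" using assms by (simp add: add_pos_nonneg)
  show "k > 0" using assms den by (simp add: k_def)
  have k1: "k * (1 + c / 2) \<le> c / 2"
  proof -
    have "k * (2 + c) \<le> c"
      using assms by (simp add: k_def min_le_iff_disj pos_le_divide_eq [symmetric])
    then show ?thesis by (simp add: algebra_simps)
  qed
  have k2: "k * (a + c\<^sup>2 / 2 + c / 2) \<le> c * a / 2"
  proof -
    have "k * (2 * a + c\<^sup>2 + c) \<le> c * a"
      using den by (simp add: k_def min_le_iff_disj pos_le_divide_eq [symmetric])
    then show ?thesis by (simp add: algebra_simps)
  qed
  fix y v :: real
  have "k * lyapunov_form a c y v \<le> k * ((1 + c / 2) * v\<^sup>2 + (a + c\<^sup>2 / 2 + c / 2) * y\<^sup>2)"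
    using lyapunov_form_le[of c a y v] assms \<open>k > 0\<close> by (intro mult_left_mono) auto
  also have "\<dots> = k * (1 + c / 2) * v\<^sup>2 + k * (a + c\<^sup>2 / 2 + c / 2) * y\<^sup>2"
    by (simp add: algebra_simps)
  also have "\<dots> \<le> c / 2 * v\<^sup>2 + c * a / 2 * y\<^sup>2"
    using k1 k2 by (intro add_mono mult_right_mono) auto
  finally show "k * lyapunov_form a c y v \<le> c / 2 * v\<^sup>2 + c * a / 2 * y\<^sup>2" .
qed

lemma dissipation_bound:
  fixes a c e f y v :: real
  assumes "\<bar>f\<bar> \<le> e" "c \<ge> 0" "e \<le> c / 2" "e * (c + 1) \<le> c * a / 2"
  shows "- c * v\<^sup>2 - c * (a + f) * y\<^sup>2 - 2 * f * y * v \<le> - (c / 2) * v\<^sup>2 - (c * a / 2) * y\<^sup>2"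
proof -
  have "\<bar>2 * y * v\<bar> \<le> y\<^sup>2 + v\<^sup>2"
    using sum_squares_bound[of y v] sum_squares_bound[of y "- v"]
    by (simp add: abs_if power2_eq_square)
  then have "\<bar>f\<bar> * \<bar>2 * y * v\<bar> \<le> e * (y\<^sup>2 + v\<^sup>2)"
    using assms(1) by (intro mult_mono) auto
  moreover have "- (2 * f * y * v) \<le> \<bar>f\<bar> * \<bar>2 * y * v\<bar>"
    using abs_ge_minus_self[of "2 * f * y * v"] by (simp add: abs_mult)
  ultimately have cross: "- (2 * f * y * v) \<le> e * y\<^sup>2 + e * v\<^sup>2"
    by (simp add: algebra_simps)
  have "c * (- e) \<le> c * f" using assms(1,2) by (intro mult_left_mono) auto
  then have perturb: "- c * e * y\<^sup>2 \<le> c * f * y\<^sup>2" by (intro mult_right_mono) auto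
  have "0 \<le> (c / 2 - e) * v\<^sup>2" "0 \<le> (c * a / 2 - e * (c + 1)) * y\<^sup>2"
    using assms(3,4) by simp_all
  with cross perturb show ?thesis by (simp add: algebra_simps)
qed

lemma powr_weighted_nonincreasing:
  fixes W D :: "real \<Rightarrow> real"
  assumes "T > 0" "T \<le> t"
    and deriv: "\<And>s. s \<ge> T \<Longrightarrow> (W has_real_derivative D s) (at s)"
    and decay: "\<And>s. s \<ge> T \<Longrightarrow> s * D s \<le> - k * W s"
  shows "t powr k * W t \<le> T powr k * W T"
proof (rule DERIV_nonpos_imp_nonincreasing[OF \<open>T \<le> t\<close>])
  fix s assume s: "T \<le> s" "s \<le> t"
  then have "s > 0" using \<open>T > 0\<close> by linarith
  have "((\<lambda>s. s powr k * W s) has_real_derivative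
      (k * s powr (k - 1) * W s + D s * s powr k)) (at s)"
    by (rule DERIV_mult[OF has_real_derivative_powr[OF \<open>s > 0\<close>] deriv[OF s(1)]])
  moreover have "k * s powr (k - 1) * W s + D s * s powr k = s powr (k - 1) * (k * W s + s * D s)"
    using powr_mult_base[of s "k - 1"] \<open>s > 0\<close> by (simp add: algebra_simps)
  moreover have "s powr (k - 1) * (k * W s + s * D s) \<le> 0"
    using decay[OF s(1)] by (intro mult_nonneg_nonpos) auto
  ultimately show "\<exists>d. ((\<lambda>s. s powr k * W s) has_real_derivative d) (at s) \<and> d \<le> 0"
    by auto
qed

lemma euler_ode_deriv_scaled:
  fixes b c t w z :: real
  assumes "t > 0"
    and "(y' has_real_derivative w) (at t)"
    and "w + (c + 1) / t * y' t + b / t\<^sup>2 * z = 0"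
  shows "((\<lambda>s. s * y' s) has_real_derivative (- c * y' t - b * z / t)) (at t)"
proof -
  have "w = - (c + 1) / t * y' t - b / t\<^sup>2 * z"
    using assms(3) by linarith
  then have "t * (y' t + t * w) = t * (- c * y' t - b * z / t)"
    using \<open>t > 0\<close> by (simp add: field_simps power2_eq_square)
  then have "y' t + t * w = - c * y' t - b * z / t"
    using \<open>t > 0\<close> by simp
  moreover have "((\<lambda>s. s * y' s) has_real_derivative (y' t + t * w)) (at t)"
    using assms(2) by (auto intro!: derivative_eq_intros)
  ultimately show ?thesis by simp
qed

lemma lyapunov_form_deriv_along_solution:
  fixes a c g t w :: real
  assumes "t > 0"
    and "(y has_real_derivative y' t) (at t)"
    and "(y' has_real_derivative w) (at t)"
    and "w + (c + 1) / t * y' t + (a + g) / t\<^sup>2 * y t = 0"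
  shows "((\<lambda>s. lyapunov_form a c (y s) (s * y' s)) has_real_derivative
           (- c * (t * y' t)\<^sup>2 - c * (a + g) * (y t)\<^sup>2 - 2 * g * y t * (t * y' t)) / t) (at t)"
proof -
  define v where "v s = s * y' s" for s
  define v' where "v' = - c * y' t - (a + g) * y t / t"
  have "(v has_real_derivative v') (at t)"
    unfolding v_def[abs_def] v'_def by (rule euler_ode_deriv_scaled[OF assms(1,3,4)])
  then have "((\<lambda>s. lyapunov_form a c (y s) (v s)) has_real_derivative
      2 * v t * v' + c * (y' t * v t + y t * v') + (a + c\<^sup>2 / 2) * (2 * y t * y' t)) (at t)"
    unfolding lyapunov_form_def using assms(2)
    by (auto intro!: derivative_eq_intros simp: algebra_simps)
  moreover have "2 * v t * v' + c * (y' t * v t + y t * v') + (a + c\<^sup>2 / 2) * (2 * y t * y' t)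
      = (- c * (v t)\<^sup>2 - c * (a + g) * (y t)\<^sup>2 - 2 * g * y t * v t) / t"
    using \<open>t > 0\<close> unfolding v_def v'_def by (simp add: field_simps power2_eq_square)
  ultimately show ?thesis by (simp add: v_def)
qed

lemma tendsto_zero_if_square_le_powr:
  fixes y :: "real \<Rightarrow> real"
  assumes "k > 0" and bound: "\<And>t. t \<ge> T \<Longrightarrow> (y t)\<^sup>2 \<le> C * t powr (- k)"
  shows "(y \<longlongrightarrow> 0) at_top"
proof -
  have "((\<lambda>t. t powr (- k)) \<longlongrightarrow> 0) at_top"
    using \<open>k > 0\<close> by (intro tendsto_neg_powr filterlim_ident) simp
  then have "((\<lambda>t. C * t powr (- k)) \<longlongrightarrow> 0) at_top"
    by (rule tendsto_mult_right_zero)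
  then have "((\<lambda>t. (y t)\<^sup>2) \<longlongrightarrow> 0) at_top"
    by (rule tendsto_sandwich[rotated 2, OF tendsto_const])
       (use bound in \<open>auto simp: eventually_at_top_linorder\<close>)
  then have "((\<lambda>t. \<bar>y t\<bar>) \<longlongrightarrow> 0) at_top"
    using tendsto_real_sqrt by fastforce
  then show ?thesis by (simp add: tendsto_rabs_zero_iff)
qed

lemma euler_type_solution_tendsto_zero:
  fixes a c :: real and f y y' y'' :: "real \<Rightarrow> real"
  assumes a: "a > 0" and c: "c > 0"
    and f_lim: "(f \<longlongrightarrow> 0) at_top"
    and dy: "\<And>t. t > 0 \<Longrightarrow> (y has_real_derivative y' t) (at t)"
    and dy': "\<And>t. t > 0 \<Longrightarrow> (y' has_real_derivative y'' t) (at t)"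
    and ode: "\<And>t. t > 0 \<Longrightarrow> y'' t + (c + 1) / t * y' t + (a + f t) / t\<^sup>2 * y t = 0"
  shows "(y \<longlongrightarrow> 0) at_top"
proof -
  define v where "v t = t * y' t" for t
  define W where "W t = lyapunov_form a c (y t) (v t)" for t
  define D where "D t = (- c * (v t)\<^sup>2 - c * (a + f t) * (y t)\<^sup>2 - 2 * f t * y t * v t) / t" for t
  have dW: "(W has_real_derivative D t) (at t)" if "t > 0" for t
    unfolding W_def[abs_def] D_def v_def
    by (rule lyapunov_form_deriv_along_solution[OF that dy[OF that] dy'[OF that] ode[OF that]])
  define e where "e = min (c / 2) (c * a / (2 * (c + 1)))"
  have e: "e > 0" "e \<le> c / 2" "e * (c + 1) \<le> c * a / 2"
  proof -
    show "e > 0" using a c by (simp add: e_def)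
    show "e \<le> c / 2" unfolding e_def by (rule min.cobounded1)
    have "e \<le> c * a / (2 * (c + 1))" by (simp add: e_def)
    then show "e * (c + 1) \<le> c * a / 2" using c by (simp add: field_simps)
  qed
  obtain T where T: "T > 0" and small_f: "\<And>t. t \<ge> T \<Longrightarrow> \<bar>f t\<bar> \<le> e"
  proof -
    have "\<forall>\<^sub>F t in at_top. \<bar>f t\<bar> < e"
      using f_lim e(1) by (simp add: tendsto_iff dist_real_def)
    then obtain T0 where "\<And>t. t \<ge> T0 \<Longrightarrow> \<bar>f t\<bar> < e"
      by (auto simp: eventually_at_top_linorder)
    then show thesis by (intro that[of "max 1 T0"]) force+
  qed
  obtain k where k: "k > 0"
    and dominated: "\<And>y v. k * lyapunov_form a c y v \<le> c / 2 * v\<^sup>2 + c * a / 2 * y\<^sup>2"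
    using lyapunov_form_dominated[OF a c] by blast
  have decay: "t * D t \<le> - k * W t" if "t \<ge> T" for t
  proof -
    have "t * D t = - c * (v t)\<^sup>2 - c * (a + f t) * (y t)\<^sup>2 - 2 * f t * y t * v t"
      using that T by (simp add: D_def)
    also have "\<dots> \<le> - (c / 2) * (v t)\<^sup>2 - (c * a / 2) * (y t)\<^sup>2"
      using dissipation_bound[OF small_f[OF that] _ e(2,3)] c by simp
    also have "\<dots> \<le> - k * W t"
      using dominated[of "y t" "v t"] by (simp add: W_def)
    finally show ?thesis .
  qed
  have "(y t)\<^sup>2 \<le> T powr k * W T / a * t powr (- k)" if "t \<ge> T" for t
  proof -
    have "t > 0" using that T by linarith
    have "t powr k * (a * (y t)\<^sup>2) \<le> t powr k * W t"
      using lyapunov_form_ge unfolding W_def by (intro mult_left_mono) auto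
    also have "\<dots> \<le> T powr k * W T"
      using powr_weighted_nonincreasing[OF T that dW decay] T by simp
    finally show ?thesis
      using \<open>t > 0\<close> a by (simp add: powr_minus field_simps)
  qed
  then show ?thesis by (rule tendsto_zero_if_square_le_powr[OF k])
qed

theorem lemma3p4:
  fixes n :: nat and a t0 :: real and f y y' y'' :: "real \<Rightarrow> real"
  assumes n: "n \<ge> 3"
    and a: "a > 0"
    and f_cont: "continuous_on {0<..} f"
    and f_lim: "(f \<longlongrightarrow> 0) at_top"
    and dy: "\<And>t. t > 0 \<Longrightarrow> (y has_real_derivative y' t) (at t)"
    and dy': "\<And>t. t > 0 \<Longrightarrow> (y' has_real_derivative y'' t) (at t)"
    and ode: "\<And>t. t > 0 \<Longrightarrow>
                y'' t + (real n - 1) / t * y' t + (a + f t) / t\<^sup>2 * y t = 0"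
    and t0: "t0 > 0"
    and bdd: "\<exists>M. \<forall>t > t0. \<bar>y t\<bar> \<le> M"
  shows "(y \<longlongrightarrow> 0) at_top"
proof (rule euler_type_solution_tendsto_zero[OF a _ f_lim dy dy'])
  show "real n - 2 > 0" using n by simp
  show "y'' t + (real n - 2 + 1) / t * y' t + (a + f t) / t\<^sup>2 * y t = 0" if "t > 0" for t
    using ode[OF that] by simp
qed

end
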